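(* For a nonempty finite set $S=\{i_1<i_2<\cdots<i_k\}$ of positive integers define the polynomial $$r_S(x_1,x_2,\ldots) = (x_{i_2} + \cdots + x_{i_k} - 1)(x_{i_3} + \cdots + x_{i_k} - 1) \cdots (x_{i_{k-1}}+x_{i_k} - 1) (x_{i_k} - 1)$$ (so $r_S=1$ when $|S|=1$). Let $n\ge 2$, let $\mathbf x$ denote the variables $x_1,x_2,\ldots$ and $\mathbf x/2$ denote $x_1/2,x_2/2,\ldots$. Then $$r_{[n]}(\mathbf x) = 2^{n-1} r_{[n]}(\mathbf x/2) + \sum_{1 \in S \subsetneq [n]} r_S(\mathbf x) \cdot r_{[n] \setminus S}(\mathbf x),$$ where $[n]=\{1,\dots,n\}$ and the sum is over all proper subsets $S$ of $[n]$ containing $1$. *)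

theory Defs
  imports Complex_Main
begin

text \<open>For a nonempty finite S = {i_1 < ... < i_k} of positive integers,
  r_S(x) = prod_{j=2..k} ((x_{i_j} + ... + x_{i_k}) - 1).
  The factor indexed by j corresponds to the element s = i_j of S other than Min S,
  and x_{i_j} + ... + x_{i_k} is the sum of x_t over t in S with t >= s.
  Polynomials in x_1, x_2, ... are represented by their evaluation at an
  arbitrary real point x :: nat => real.\<close>

definition r :: "nat set \<Rightarrow> (nat \<Rightarrow> real) \<Rightarrow> real" where
  "r S x = (\<Prod>s \<in> S - {Min S}. (\<Sum>t \<in> {t \<in> S. s \<le> t}. x t) - 1)"

end

theory Submission
  imports Defs
begin

(* Let rc c S be r S with the constant 1 in every factor replaced by c. By homogeneity
   2^(n-1) r [n] (x/2) = rc 2 [n] x, so the identity reads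
     rc 1 B - rc 2 B = sum over S < B with Min B : S of r S * r (B - S).
   Splitting off m = Min B from B = {m} + B' and writing s = sum of x over B' gives
   rc c B = (s - c) rc c B', hence rc 1 B - rc 2 B = (s - 2)(rc 1 B' - rc 2 B') + r B'.
   On the right, the sets S are {m} + T with T < B': T = {} contributes r B', and pairing
   every other T with B' - T combines the factors (sum_T x - 1) and (sum_(B'-T) x - 1)
   into s - 2, so induction on |B| closes the argument. *)

definition rc :: "real \<Rightarrow> nat set \<Rightarrow> (nat \<Rightarrow> real) \<Rightarrow> real" where
  "rc c S x = (\<Prod>s \<in> S - {Min S}. (\<Sum>t \<in> {t \<in> S. s \<le> t}. x t) - c)"

lemma r_eq_rc: "r S x = rc 1 S x"
  by (simp add: r_def rc_def)

lemma rc_singleton [simp]: "rc c {a} x = 1"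
  by (simp add: rc_def)

lemma rc_scale:
  assumes "finite S" "S \<noteq> {}"
  shows "rc (k * c) S (\<lambda>i. k * y i) = k ^ (card S - 1) * rc c S y"
proof -
  have "card (S - {Min S}) = card S - 1"
    using assms by simp
  then show ?thesis
    unfolding rc_def
    by (simp add: sum_distrib_left[symmetric] right_diff_distrib[symmetric] prod.distrib)
qed

lemma rc_insert_less:
  assumes "finite B" "B \<noteq> {}" "\<forall>b\<in>B. a < b"
  shows "rc c (insert a B) x = (sum x B - c) * rc c B x"
proof -
  have min_B: "Min B \<in> B"
    using assms by simp
  then have "Min (insert a B) = a" and a_notin: "a \<notin> B"
    using assms by auto
  then have "rc c (insert a B) x = (\<Prod>s \<in> B. (\<Sum>t \<in> {t \<in> B. s \<le> t}. x t) - c)"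
    unfolding rc_def
    by (intro prod.cong) (use assms in \<open>auto intro!: sum.cong\<close>)
  also have "\<dots> = ((\<Sum>t \<in> {t \<in> B. Min B \<le> t}. x t) - c) * rc c B x"
    unfolding rc_def using prod.remove[OF assms(1) min_B] by simp
  also have "{t \<in> B. Min B \<le> t} = B"
    using assms by auto
  finally show ?thesis .
qed

lemma sum_psubsets_containing_insert:
  assumes "finite A" "m \<notin> A"
  shows "(\<Sum>S | S \<subset> insert m A \<and> m \<in> S. f S) = (\<Sum>T | T \<subset> A. f (insert m T))"
proof -
  have "{S. S \<subset> insert m A \<and> m \<in> S} = insert m ` {T. T \<subset> A}"
  proof (intro set_eqI iffI)
    fix S
    assume "S \<in> {S. S \<subset> insert m A \<and> m \<in> S}"
    then have "S - {m} \<subset> A" "S = insert m (S - {m})"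
      using assms by auto
    then show "S \<in> insert m ` {T. T \<subset> A}"
      by blast
  qed (use assms in auto)
  moreover have "inj_on (insert m) {T. T \<subset> A}"
    using assms by (intro inj_onI) (metis Diff_insert_absorb mem_Collect_eq psubsetD)
  ultimately show ?thesis
    by (simp add: sum.reindex)
qed

lemma sum_nonempty_psubsets_complement_pairs:
  assumes "finite A" "a \<in> A"
  shows "(\<Sum>T | T \<subset> A \<and> T \<noteq> {}. f T) = (\<Sum>T | T \<subset> A \<and> a \<in> T. f T + f (A - T))"
proof -
  define P where "P = {T. T \<subset> A \<and> a \<in> T}"
  have fin_P: "finite P" and fin_compl: "finite ((\<lambda>T. A - T) ` P)"
    using assms unfolding P_def
    by (auto intro: rev_finite_subset[OF finite_Collect_subsets[OF assms(1)]])
  have "{T. T \<subset> A \<and> T \<noteq> {}} = P \<union> (\<lambda>T. A - T) ` P"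
  proof (intro set_eqI iffI)
    fix T
    assume T: "T \<in> {T. T \<subset> A \<and> T \<noteq> {}}"
    show "T \<in> P \<union> (\<lambda>T. A - T) ` P"
    proof (cases "a \<in> T")
      case False
      with T assms have "A - T \<in> P" "T = A - (A - T)"
        unfolding P_def by auto
      then show ?thesis
        by blast
    qed (use T in \<open>auto simp: P_def\<close>)
  qed (use assms in \<open>auto simp: P_def\<close>)
  moreover have "P \<inter> (\<lambda>T. A - T) ` P = {}"
    unfolding P_def by auto
  moreover have "inj_on (\<lambda>T. A - T) P"
    unfolding P_def by (intro inj_onI) (metis Diff_Diff_Int inf.absorb2 mem_Collect_eq psubset_imp_subset)
  ultimately show ?thesis
    unfolding P_def[symmetric]
    by (simp add: sum.union_disjoint[OF fin_P fin_compl] sum.reindex sum.distrib)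
qed

lemma sum_psubsets_containing_min_insert:
  assumes "finite A" "A \<noteq> {}" "\<forall>b\<in>A. m < b"
  shows "(\<Sum>S | S \<subset> insert m A \<and> m \<in> S. r S x * r (insert m A - S) x)
    = r A x + (sum x A - 2) * (\<Sum>T | T \<subset> A \<and> Min A \<in> T. r T x * r (A - T) x)"
proof -
  have m_notin: "m \<notin> A"
    using assms by auto
  have fin: "finite {T. T \<subset> A \<and> T \<noteq> {}}"
    by (rule rev_finite_subset[OF finite_Collect_subsets[OF assms(1)]]) auto
  have "{T. T \<subset> A} = insert {} {T. T \<subset> A \<and> T \<noteq> {}}"
    using assms by auto
  then have "(\<Sum>S | S \<subset> insert m A \<and> m \<in> S. r S x * r (insert m A - S) x)
      = r A x + (\<Sum>T | T \<subset> A \<and> T \<noteq> {}. r (insert m T) x * r (A - T) x)"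
    using assms fin m_notin
    by (simp add: sum_psubsets_containing_insert r_eq_rc insert_Diff_if)
  also have "(\<Sum>T | T \<subset> A \<and> T \<noteq> {}. r (insert m T) x * r (A - T) x)
      = (\<Sum>T | T \<subset> A \<and> T \<noteq> {}. (sum x T - 1) * r T x * r (A - T) x)"
  proof (intro sum.cong refl)
    fix T
    assume "T \<in> {T. T \<subset> A \<and> T \<noteq> {}}"
    with assms have "finite T" "T \<noteq> {}" "\<forall>b\<in>T. m < b"
      by (auto dest: finite_subset)
    then show "r (insert m T) x * r (A - T) x = (sum x T - 1) * r T x * r (A - T) x"
      by (simp add: r_eq_rc rc_insert_less)
  qed
  also have "\<dots> = (\<Sum>T | T \<subset> A \<and> Min A \<in> T.
                    (sum x T - 1 + (sum x (A - T) - 1)) * (r T x * r (A - T) x))"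
    unfolding sum_nonempty_psubsets_complement_pairs[OF assms(1) Min_in[OF assms(1,2)]]
    by (intro sum.cong refl) (auto simp: double_diff algebra_simps)
  also have "\<dots> = (sum x A - 2) * (\<Sum>T | T \<subset> A \<and> Min A \<in> T. r T x * r (A - T) x)"
    unfolding sum_distrib_left
    by (intro sum.cong refl) (use assms in \<open>auto simp: sum.subset_diff[of _ A]\<close>)
  finally show ?thesis .
qed

lemma rc_1_minus_rc_2:
  assumes "finite B" "B \<noteq> {}"
  shows "rc 1 B x - rc 2 B x = (\<Sum>S | S \<subset> B \<and> Min B \<in> S. r S x * r (B - S) x)"
  using assms
proof (induction "card B" arbitrary: B rule: less_induct)
  case less
  show ?case
  proof (cases "card B = 1")
    case True
    then obtain a where B: "B = {a}"
      using card_1_singletonE by blast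
    then have "{S. S \<subset> B \<and> Min B \<in> S} = {}"
      by auto
    then show ?thesis
      unfolding B by (simp only:) simp
  next
    case False
    define m where "m = Min B"
    define A where "A = B - {m}"
    have B: "B = insert m A"
      using less.prems unfolding A_def m_def by (auto intro: Min_in)
    have m_less: "\<forall>b\<in>A. m < b"
      using less.prems unfolding A_def m_def by (auto simp: order.strict_iff_order)
    have "A \<noteq> {}"
      using False unfolding B by auto
    moreover have "finite A" "card A < card B"
      using less.prems card_Diff1_less[OF less.prems(1) Min_in[OF less.prems]]
      unfolding A_def m_def by auto
    ultimately have A: "finite A" "A \<noteq> {}" "card A < card B"
      by auto
    have "rc 1 B x - rc 2 B x = (sum x A - 2) * (rc 1 A x - rc 2 A x) + rc 1 A x"
      unfolding B using A by (simp add: rc_insert_less m_less algebra_simps)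
    also have "\<dots> = (\<Sum>S | S \<subset> B \<and> m \<in> S. r S x * r (B - S) x)"
      unfolding B
      using less.hyps[OF A(3) A(1,2)] sum_psubsets_containing_min_insert[OF A(1,2) m_less]
      by (simp add: r_eq_rc)
    finally show ?thesis
      unfolding m_def .
  qed
qed

theorem lemma3p2:
  fixes n :: nat and x :: "nat \<Rightarrow> real"
  assumes "n \<ge> 2"
  shows "r {1..n} x = 2 ^ (n - 1) * r {1..n} (\<lambda>i. x i / 2)
           + (\<Sum>S \<in> {S. S \<subset> {1..n} \<and> 1 \<in> S}. r S x * r ({1..n} - S) x)"
proof -
  have min: "Min {1..n} = (1::nat)"
    using assms by (intro Min_eqI) auto
  have "2 ^ (n - 1) * r {1..n} (\<lambda>i. x i / 2) = rc 2 {1..n} x"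
    using rc_scale[of "{1..n}" 2 1 "\<lambda>i. x i / 2"] assms by (simp add: r_eq_rc)
  then show ?thesis
    using rc_1_minus_rc_2[of "{1..n}" x, unfolded min] assms by (simp add: r_eq_rc)
qed

end
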